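(* Let $Q=ABCD$ be a non-degenerate convex quadrangle of perimeter $2$ and $Q^\circ=KLMN$ its dual. Then $|AC|=|KM|$ and $|BD|=|LN|$; that is, duality preserves the lengths of the corresponding diagonals.
   Context: Identify $\mathbb{R}^2$ with $\mathbb{C}$. A quadrangle $Q=ABCD$ is an ordered 4-tuple of points $A,B,C,D\in\mathbb{C}$: $A$ is the first vertex and the order $A\to B\to C\to D\to A$ is the direction of traversal. Its edge vectors are $z_1=B-A$, $z_2=C-B$, $z_3=D-C$, $z_4=A-D$, so $z_1+z_2+z_3+z_4=0$; its perimeter is $|z_1|+|z_2|+|z_3|+|z_4|$. $Q$ is non-degenerate if each pair of consecutive edge vectors $(z_1,z_2),(z_2,z_3),(z_3,z_4),(z_4,z_1)$ consists of nonzero, non-collinear vectors. A non-degenerate quadrangle is convex if no two opposite edges intersect and all its interior angles are less than $\pi$. Associated plane: for a non-degenerate $Q$ of perimeter $2$, choose $u_1,\dots,u_4\in\mathbb{C}$ with $u_k^2=z_k$, where $u_1$ is an arbitrary square root of $z_1$ and for $k=1,2,3$ the sign of $u_{k+1}$ is chosen so that $\operatorname{Im}(\overline{u_k}u_{k+1})$ has the same sign as $\operatorname{Im}(\overline{z_k}z_{k+1})$. Write $u_k=a_k+i b_k$ and $\bar a=(a_1,a_2,a_3,a_4)$, $\bar b=(b_1,b_2,b_3,b_4)$; these are orthonormal in $\mathbb{R}^4$. Let $\Pi=\operatorname{span}(\bar a,\bar b)$ and $\Pi^\perp$ its orthogonal complement. Dual quadrangle: choose an orthonormal basis $(\bar c,\bar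 d)$ of $\Pi^\perp$, put $w_k=(c_k+i d_k)^2$; then $\sum_k w_k=0$ and $\sum_k|w_k|=2$. The dual quadrangle $Q^\circ=KLMN$ is the quadrangle with $L-K=w_1$, $M-L=w_2$, $N-M=w_3$, $K-N=w_4$. It is determined up to rotation, reflection and translation. *)

theory Defs
  imports "HOL-Analysis.Analysis"
begin

definition edge :: "complex \<Rightarrow> complex \<Rightarrow> complex \<Rightarrow> complex \<Rightarrow> nat \<Rightarrow> complex" where
  "edge A B C D k =
     (if k = 1 then B - A else if k = 2 then C - B else if k = 3 then D - C else A - D)"

definition vertex :: "complex \<Rightarrow> complex \<Rightarrow> complex \<Rightarrow> complex \<Rightarrow> nat \<Rightarrow> complex" where
  "vertex A B C D k =
     (if k = 1 then A else if k = 2 then B else if k = 3 then C else D)"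

definition nxt :: "nat \<Rightarrow> nat" where
  "nxt k = k mod 4 + 1"

definition cross :: "complex \<Rightarrow> complex \<Rightarrow> real" where
  "cross z w = Im (cnj z * w)"

definition perimeter :: "complex \<Rightarrow> complex \<Rightarrow> complex \<Rightarrow> complex \<Rightarrow> real" where
  "perimeter A B C D = (\<Sum>k=1..4. norm (edge A B C D k))"

definition nondegenerate :: "complex \<Rightarrow> complex \<Rightarrow> complex \<Rightarrow> complex \<Rightarrow> bool" where
  "nondegenerate A B C D \<longleftrightarrow>
     (\<forall>k\<in>{1..4}. edge A B C D k \<noteq> 0 \<and> edge A B C D (nxt k) \<noteq> 0 \<and>
        \<not> collinear {0, edge A B C D k, edge A B C D (nxt k)})"

definition orientation :: "complex \<Rightarrow> complex \<Rightarrow> complex \<Rightarrow> complex \<Rightarrow> real" where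
  "orientation A B C D =
     sgn ((\<Sum>k=1..4. cross (vertex A B C D k) (vertex A B C D (nxt k))) / 2)"

text \<open>Interior angle at the vertex between edge k and edge k+1 (the vertex with index nxt k):
  pi minus the signed turning angle, measured relative to the orientation.\<close>
definition interior_angle :: "complex \<Rightarrow> complex \<Rightarrow> complex \<Rightarrow> complex \<Rightarrow> nat \<Rightarrow> real" where
  "interior_angle A B C D k =
     pi - orientation A B C D * Arg (edge A B C D (nxt k) / edge A B C D k)"

definition convex_quad :: "complex \<Rightarrow> complex \<Rightarrow> complex \<Rightarrow> complex \<Rightarrow> bool" where
  "convex_quad A B C D \<longleftrightarrow>
     nondegenerate A B C D \<and>
     closed_segment A B \<inter> closed_segment C D = {} \<and>
     closed_segment B C \<inter> closed_segment D A = {} \<and>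
     (\<forall>k\<in>{1..4}. interior_angle A B C D k < pi)"

definition sqrt_lift :: "complex \<Rightarrow> complex \<Rightarrow> complex \<Rightarrow> complex \<Rightarrow> (nat \<Rightarrow> complex) \<Rightarrow> bool" where
  "sqrt_lift A B C D u \<longleftrightarrow>
     (\<forall>k\<in>{1..4}. (u k)\<^sup>2 = edge A B C D k) \<and>
     (\<forall>k\<in>{1..3}. sgn (cross (u k) (u (Suc k))) =
                  sgn (cross (edge A B C D k) (edge A B C D (Suc k))))"

definition vec_a :: "(nat \<Rightarrow> complex) \<Rightarrow> real^4" where
  "vec_a u = vector [Re (u 1), Re (u 2), Re (u 3), Re (u 4)]"

definition vec_b :: "(nat \<Rightarrow> complex) \<Rightarrow> real^4" where
  "vec_b u = vector [Im (u 1), Im (u 2), Im (u 3), Im (u 4)]"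

definition assoc_plane :: "(nat \<Rightarrow> complex) \<Rightarrow> (real^4) set" where
  "assoc_plane u = span {vec_a u, vec_b u}"

definition orth_compl :: "(real^4) set \<Rightarrow> (real^4) set" where
  "orth_compl S = {x. \<forall>y\<in>S. orthogonal x y}"

definition orthonormal_basis_of :: "real^4 \<Rightarrow> real^4 \<Rightarrow> (real^4) set \<Rightarrow> bool" where
  "orthonormal_basis_of c d S \<longleftrightarrow>
     c \<in> S \<and> d \<in> S \<and> norm c = 1 \<and> norm d = 1 \<and> orthogonal c d \<and> span {c, d} = S"

definition dual_edge :: "real^4 \<Rightarrow> real^4 \<Rightarrow> 4 \<Rightarrow> complex" where
  "dual_edge c d k = (Complex (c $ k) (d $ k))\<^sup>2"

definition is_dual :: "complex \<Rightarrow> complex \<Rightarrow> complex \<Rightarrow> complex \<Rightarrow>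
    complex \<Rightarrow> complex \<Rightarrow> complex \<Rightarrow> complex \<Rightarrow> bool" where
  "is_dual A B C D K L M N \<longleftrightarrow>
     (\<exists>u c d. sqrt_lift A B C D u \<and>
        orthonormal_basis_of c d (orth_compl (assoc_plane u)) \<and>
        L - K = dual_edge c d 1 \<and> M - L = dual_edge c d 2 \<and>
        N - M = dual_edge c d 3 \<and> K - N = dual_edge c d 4)"

end

theory Submission
  imports Defs
begin

text \<open>Write \<open>u\<^sub>k = a\<^sub>k + i b\<^sub>k\<close> and \<open>v\<^sub>k = c\<^sub>k + i d\<^sub>k\<close>, so that the edges are
  \<open>z\<^sub>k = u\<^sub>k\<^sup>2\<close> and \<open>w\<^sub>k = v\<^sub>k\<^sup>2\<close>. The closing condition \<open>\<Sum> u\<^sub>k\<^sup>2 = 0\<close> and the perimeter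
  \<open>\<Sum> |u\<^sub>k|\<^sup>2 = 2\<close> say that \<open>a, b\<close> are orthonormal, so \<open>a, b, c, d\<close> are the columns of an
  orthogonal \<open>4 \<times> 4\<close> matrix, whose rows are then orthonormal too:
  \<open>|u\<^sub>j|\<^sup>2 + |v\<^sub>j|\<^sup>2 = 1\<close> and \<open>u\<^sub>j \<bullet> u\<^sub>k + v\<^sub>j \<bullet> v\<^sub>k = 0\<close> for \<open>j \<noteq> k\<close>.
  A diagonal is a sum of two consecutive edges, and
  \<open>|p\<^sup>2 + q\<^sup>2|\<^sup>2 = (|p|\<^sup>2 - |q|\<^sup>2)\<^sup>2 + 4 (p \<bullet> q)\<^sup>2\<close>; the row relations replace both
  \<open>|u\<^sub>j|\<^sup>2 - |u\<^sub>k|\<^sup>2\<close> and \<open>u\<^sub>j \<bullet> u\<^sub>k\<close> by their negatives for \<open>v\<close>, so the diagonals agree.\<close>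

lemma vector_4 [simp]:
  "(vector [x, y, z, w] :: 'a::zero^4) $ 1 = x"
  "(vector [x, y, z, w] :: 'a^4) $ 2 = y"
  "(vector [x, y, z, w] :: 'a^4) $ 3 = z"
  "(vector [x, y, z, w] :: 'a^4) $ 4 = w"
  unfolding vector_def by simp_all

lemma norm_add_squares_sq:
  fixes p q :: complex
  shows "(norm (p\<^sup>2 + q\<^sup>2))\<^sup>2 = ((norm p)\<^sup>2 - (norm q)\<^sup>2)\<^sup>2 + 4 * (p \<bullet> q)\<^sup>2"
  unfolding cmod_power2 inner_complex_def by (simp add: power2_eq_square algebra_simps)

lemma norm_add_squares_eq_complementary:
  fixes p q r s :: complex
  assumes "(norm p)\<^sup>2 + (norm r)\<^sup>2 = 1" and "(norm q)\<^sup>2 + (norm s)\<^sup>2 = 1"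
    and "p \<bullet> q + r \<bullet> s = 0"
  shows "norm (p\<^sup>2 + q\<^sup>2) = norm (r\<^sup>2 + s\<^sup>2)"
proof -
  have "(norm p)\<^sup>2 - (norm q)\<^sup>2 = - ((norm r)\<^sup>2 - (norm s)\<^sup>2)" and "p \<bullet> q = - (r \<bullet> s)"
    using assms by linarith+
  then have "(norm (p\<^sup>2 + q\<^sup>2))\<^sup>2 = (norm (r\<^sup>2 + s\<^sup>2))\<^sup>2"
    by (simp only: norm_add_squares_sq power2_minus)
  then show ?thesis
    by (simp add: power2_eq_iff_nonneg)
qed

lemma orth_compl_frame_expansion:
  fixes a b c d x :: "real^4"
  assumes "a \<bullet> a = 1" and "b \<bullet> b = 1" and "a \<bullet> b = 0"
    and "orthonormal_basis_of c d (orth_compl (span {a, b}))"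
  shows "x = (x \<bullet> a) *\<^sub>R a + (x \<bullet> b) *\<^sub>R b + (x \<bullet> c) *\<^sub>R c + (x \<bullet> d) *\<^sub>R d"
proof -
  from assms(4) have c: "c \<in> orth_compl (span {a, b})" and d: "d \<in> orth_compl (span {a, b})"
    and cd: "c \<bullet> c = 1" "d \<bullet> d = 1" "c \<bullet> d = 0"
    and span_cd: "span {c, d} = orth_compl (span {a, b})"
    by (auto simp: orthonormal_basis_of_def orthogonal_def norm_eq_1)
  have cd_ab: "c \<bullet> a = 0" "c \<bullet> b = 0" "d \<bullet> a = 0" "d \<bullet> b = 0"
    using c d by (auto simp: orth_compl_def orthogonal_def span_base)
  define y where "y = x - (x \<bullet> a) *\<^sub>R a - (x \<bullet> b) *\<^sub>R b - (x \<bullet> c) *\<^sub>R c - (x \<bullet> d) *\<^sub>R d"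
  have y_perp: "y \<bullet> a = 0" "y \<bullet> b = 0" "y \<bullet> c = 0" "y \<bullet> d = 0"
    using assms(1-3) cd cd_ab unfolding y_def
    by (simp_all add: inner_diff_left inner_commute[of b a] inner_commute[of c a]
        inner_commute[of c b] inner_commute[of d a] inner_commute[of d b] inner_commute[of d c])
  have "orthogonal y z" if "z \<in> span {a, b}" for z
    using that by (rule orthogonal_to_span) (auto simp: orthogonal_def y_perp)
  then have "y \<in> orth_compl (span {a, b})"
    by (simp add: orth_compl_def)
  then have "y \<in> span {c, d}"
    using span_cd by simp
  then have "orthogonal y y"
    by (rule orthogonal_to_span) (auto simp: orthogonal_def y_perp)
  then have "y = 0"
    by (simp add: orthogonal_def)
  then show ?thesis
    unfolding y_def by (simp add: algebra_simps)
qed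

lemma orth_compl_frame_rows:
  fixes a b c d :: "real^4"
  assumes "a \<bullet> a = 1" and "b \<bullet> b = 1" and "a \<bullet> b = 0"
    and "orthonormal_basis_of c d (orth_compl (span {a, b}))"
  shows "a$j * a$k + b$j * b$k + c$j * c$k + d$j * d$k = (if j = k then 1 else 0)"
proof -
  have "axis j 1 $ k = a$j * a$k + b$j * b$k + c$j * c$k + d$j * d$k"
    by (subst orth_compl_frame_expansion[OF assms, of "axis j 1"]) (simp add: inner_axis')
  then show ?thesis
    by (auto simp: axis_def)
qed

lemma frame_rows_diagonal_norm_eq:
  fixes a b c d :: "real^4"
  assumes rows: "\<And>j k. a$j * a$k + b$j * b$k + c$j * c$k + d$j * d$k = (if j = k then 1 else 0)"
    and "j \<noteq> k"
  shows "norm ((Complex (a$j) (b$j))\<^sup>2 + (Complex (a$k) (b$k))\<^sup>2) =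
         norm ((Complex (c$j) (d$j))\<^sup>2 + (Complex (c$k) (d$k))\<^sup>2)"
  using rows[of j j] rows[of k k] rows[of j k] \<open>j \<noteq> k\<close>
  by (intro norm_add_squares_eq_complementary; unfold cmod_power2 inner_complex_def)
     (simp_all add: power2_eq_square algebra_simps)

lemma vec_ab_nth [simp]:
  "vec_a u $ 1 = Re (u 1)" "vec_a u $ 2 = Re (u 2)" "vec_a u $ 3 = Re (u 3)" "vec_a u $ 4 = Re (u 4)"
  "vec_b u $ 1 = Im (u 1)" "vec_b u $ 2 = Im (u 2)" "vec_b u $ 3 = Im (u 3)" "vec_b u $ 4 = Im (u 4)"
  unfolding vec_a_def vec_b_def by simp_all

lemma vec_ab_orthonormal:
  assumes "(\<Sum>k=1..4. (u k)\<^sup>2) = 0" and "(\<Sum>k=1..4. (norm (u k))\<^sup>2) = 2"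
  shows "vec_a u \<bullet> vec_a u = 1" and "vec_b u \<bullet> vec_b u = 1" and "vec_a u \<bullet> vec_b u = 0"
proof -
  have sums: "Re (\<Sum>k=1..4. (u k)\<^sup>2) = vec_a u \<bullet> vec_a u - vec_b u \<bullet> vec_b u"
    "Im (\<Sum>k=1..4. (u k)\<^sup>2) = 2 * (vec_a u \<bullet> vec_b u)"
    "(\<Sum>k=1..4. (norm (u k))\<^sup>2) = vec_a u \<bullet> vec_a u + vec_b u \<bullet> vec_b u"
    unfolding cmod_power2
    by (simp_all add: inner_vec_def sum_4 numeral_eq_Suc Re_power2 Im_power2 power2_eq_square
        algebra_simps)
  show "vec_a u \<bullet> vec_a u = 1" "vec_b u \<bullet> vec_b u = 1" "vec_a u \<bullet> vec_b u = 0"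
    using assms sums by simp_all
qed

lemma sqrt_lift_sums:
  assumes "sqrt_lift A B C D u"
  shows "(\<Sum>k=1..4. (u k)\<^sup>2) = 0" and "(\<Sum>k=1..4. (norm (u k))\<^sup>2) = perimeter A B C D"
proof -
  have u: "(u k)\<^sup>2 = edge A B C D k" if "k \<in> {1..4}" for k
    using assms that by (simp add: sqrt_lift_def)
  have "(\<Sum>k=1..4. (u k)\<^sup>2) = (\<Sum>k=1..4. edge A B C D k)"
    using u by (rule sum.cong[OF refl])
  also have "\<dots> = 0"
    by (simp add: edge_def eval_nat_numeral)
  finally show "(\<Sum>k=1..4. (u k)\<^sup>2) = 0" .
  show "(\<Sum>k=1..4. (norm (u k))\<^sup>2) = perimeter A B C D"
    unfolding perimeter_def using u by (auto intro: sum.cong simp flip: norm_power)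
qed

theorem theorem7p1:
  fixes A B C D K L M N :: complex
  assumes "nondegenerate A B C D"
    and "convex_quad A B C D"
    and "perimeter A B C D = 2"
    and "is_dual A B C D K L M N"
  shows "dist A C = dist K M \<and> dist B D = dist L N"
proof -
  obtain u c d where lift: "sqrt_lift A B C D u"
    and basis: "orthonormal_basis_of c d (orth_compl (span {vec_a u, vec_b u}))"
    and w: "L - K = dual_edge c d 1" "M - L = dual_edge c d 2" "N - M = dual_edge c d 3"
    using assms(4) unfolding is_dual_def assoc_plane_def by blast
  have u: "(u 1)\<^sup>2 = B - A" "(u 2)\<^sup>2 = C - B" "(u 3)\<^sup>2 = D - C"
    using lift by (auto simp: sqrt_lift_def edge_def)
  have "(\<Sum>k=1..4. (u k)\<^sup>2) = 0" and "(\<Sum>k=1..4. (norm (u k))\<^sup>2) = 2"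
    using sqrt_lift_sums[OF lift] assms(3) by simp_all
  note rows = orth_compl_frame_rows[OF vec_ab_orthonormal[OF this] basis]
  have "dist A C = norm ((u 1)\<^sup>2 + (u 2)\<^sup>2)" and "dist B D = norm ((u 2)\<^sup>2 + (u 3)\<^sup>2)"
    and "dist K M = norm (dual_edge c d 1 + dual_edge c d 2)"
    and "dist L N = norm (dual_edge c d 2 + dual_edge c d 3)"
    unfolding u w[symmetric] by (simp_all add: dist_norm norm_minus_commute)
  moreover have "norm ((u 1)\<^sup>2 + (u 2)\<^sup>2) = norm (dual_edge c d 1 + dual_edge c d 2)"
    and "norm ((u 2)\<^sup>2 + (u 3)\<^sup>2) = norm (dual_edge c d 2 + dual_edge c d 3)"
    using frame_rows_diagonal_norm_eq[OF rows, of 1 2] frame_rows_diagonal_norm_eq[OF rows, of 2 3]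
    by (simp_all add: dual_edge_def)
  ultimately show ?thesis
    by simp
qed

end
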